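(* Suppose $n$ is even, $n_t=n_c=n/2$, and the assignment $W$ is generated by pair-switching rerandomization (PSRR) with threshold $a>0$ and tuning parameter $\gamma\ge0$ (assumed to terminate almost surely). Then the difference-in-means estimator $\widehat\tau=n_t^{-1}\sum_{i:W_i=1}Y_i(1)-n_c^{-1}\sum_{i:W_i=0}Y_i(0)$ satisfies $E(\widehat\tau)=\tau$, where $\tau=n^{-1}\sum_{i=1}^n\{Y_i(1)-Y_i(0)\}$.
   Context: Units $i=1,\dots,n$ have fixed potential outcomes $Y_i(1),Y_i(0)$ and fixed covariates $X_i\in\mathbb R^p$, with sample covariance $S_{XX}=(n-1)^{-1}\sum_i(X_i-\overline X)(X_i-\overline X)^{\mathrm T}$ invertible. Expectation is over the randomness of the design only. For an assignment $W\in\{0,1\}^n$ with $n_t$ ones, $M(W)=n_t(1-n_t/n)(\overline X_t-\overline X_c)^{\mathrm T}S_{XX}^{-1}(\overline X_t-\overline X_c)$ with $\overline X_t=n_t^{-1}\sum_{i:W_i=1}X_i$, $\overline X_c=n_c^{-1}\sum_{i:W_i=0}X_i$. PSRR: draw $W^{(0)}$ uniformly among assignments with $n_t$ ones; set $t=0$, $M^{(0)}=M(W^{(0)})$. While $M^{(t)}>a$: choose uniformly at random one index $i$ with $W^{(t)}_i=1$ and one index $j$ with $W^{(t)}_j=0$, let $W^*$ be $W^{(t)}$ with entries $i,j$ swapped, $M^*=M(W^* )$; with probability $\min\{(M^{(t)}/M^* )^\gamma,1\}$ set $W^{(t+1)}=W^*$, $M^{(t+1)}=M^*$, $t\leftarrow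 t+1$ (otherwise keep the current state and try again). Output $W=W^{(t)}$ once $M^{(t)}\le a$. *)

theory Defs
  imports "HOL-Analysis.Analysis" "HOL-Probability.SPMF"
begin

text \<open>Units are indexed by 0..<n; an assignment W is represented by its set of
treated units (W_i = 1 iff i in W). Covariates X i :: real^'p.\<close>

definition mean_cov :: "(nat \<Rightarrow> real^'p) \<Rightarrow> nat set \<Rightarrow> real^'p" where
  "mean_cov X A = (1 / real (card A)) *\<^sub>R (\<Sum>i\<in>A. X i)"

definition outer_prod :: "real^'p \<Rightarrow> real^'p \<Rightarrow> real^'p^'p" where
  "outer_prod u v = (\<chi> r c. u $ r * v $ c)"

definition Sxx :: "nat \<Rightarrow> (nat \<Rightarrow> real^'p) \<Rightarrow> real^'p^'p" where
  "Sxx n X = (1 / (real n - 1)) *\<^sub>R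
     (\<Sum>i<n. outer_prod (X i - mean_cov X {..<n}) (X i - mean_cov X {..<n}))"

definition mahal :: "nat \<Rightarrow> (nat \<Rightarrow> real^'p) \<Rightarrow> nat set \<Rightarrow> real" where
  "mahal n X W =
     (let nt = real (card W);
          d = mean_cov X W - mean_cov X ({..<n} - W)
      in nt * (1 - nt / real n) * (d \<bullet> (matrix_inv (Sxx n X) *v d)))"

text \<open>Acceptance probability min{(M/M*)^gamma, 1}; when M* <= M the ratio is
at least 1 (or +infinity if M* = 0), so the probability is 1.\<close>
definition acc_prob :: "real \<Rightarrow> real \<Rightarrow> real \<Rightarrow> real" where
  "acc_prob \<gamma> M Mstar = (if Mstar \<le> M then 1 else min ((M / Mstar) powr \<gamma>) 1)"

text \<open>The PSRR loop, started from the current assignment W, as a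
(sub)probability distribution over outputs. Losslessness = a.s. termination.\<close>
partial_function (spmf) psrr_loop ::
  "nat \<Rightarrow> (nat \<Rightarrow> real^'p) \<Rightarrow> real \<Rightarrow> real \<Rightarrow> nat set \<Rightarrow> nat set spmf" where
  "psrr_loop n X a \<gamma> W =
     (if mahal n X W \<le> a then return_spmf W
      else do {
        i \<leftarrow> spmf_of_set W;
        j \<leftarrow> spmf_of_set ({..<n} - W);
        let W' = insert j (W - {i});
        acc \<leftarrow> spmf_of_pmf (bernoulli_pmf (acc_prob \<gamma> (mahal n X W) (mahal n X W')));
        if acc then psrr_loop n X a \<gamma> W' else psrr_loop n X a \<gamma> W
      })"

definition assignments :: "nat \<Rightarrow> nat \<Rightarrow> nat set set" where
  "assignments n nt = {W. W \<subseteq> {..<n} \<and> card W = nt}"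

definition psrr :: "nat \<Rightarrow> nat \<Rightarrow> (nat \<Rightarrow> real^'p) \<Rightarrow> real \<Rightarrow> real \<Rightarrow> nat set spmf" where
  "psrr n nt X a \<gamma> = spmf_of_set (assignments n nt) \<bind> psrr_loop n X a \<gamma>"

definition tau_hat :: "nat \<Rightarrow> (nat \<Rightarrow> real) \<Rightarrow> (nat \<Rightarrow> real) \<Rightarrow> nat set \<Rightarrow> real" where
  "tau_hat n Y1 Y0 W =
     (\<Sum>i\<in>W. Y1 i) / real (card W) - (\<Sum>i\<in>{..<n} - W. Y0 i) / real (n - card W)"

definition tau :: "nat \<Rightarrow> (nat \<Rightarrow> real) \<Rightarrow> (nat \<Rightarrow> real) \<Rightarrow> real" where
  "tau n Y1 Y0 = (\<Sum>i<n. Y1 i - Y0 i) / real n"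

end

theory Submission
  imports Defs
begin

text \<open>With \<open>n\<^sub>t = n/2\<close>, taking complements maps assignments bijectively to assignments and
leaves the Mahalanobis distance unchanged. It therefore maps the uniform start to itself,
the uniform pair-switching proposal from \<open>W\<close> to the one from its complement, and preserves
every acceptance probability; by fixed-point induction the output law of PSRR is invariant
under complementation. Hence the estimator has the same expectation at \<open>W\<close> and at its
complement, and the two values always add up to \<open>2\<tau>\<close>.\<close>

abbreviation complement :: "nat \<Rightarrow> nat set \<Rightarrow> nat set" where
  "complement n W \<equiv> {..<n} - W"

lemma finite_assignments: "finite (assignments n k)"
  by (rule finite_subset[of _ "Pow {..<n}"]) (auto simp: assignments_def)

lemma finite_assignment: "W \<in> assignments n k \<Longrightarrow> finite W"
  by (auto simp: assignments_def finite_subset)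

lemma complement_assignments:
  assumes "k \<le> n"
  shows "complement n ` assignments n k = assignments n (n - k)"
    and "inj_on (complement n) (assignments n k)"
proof -
  have compl: "complement n W \<in> assignments n (n - k)" if "W \<in> assignments n k" for W n k
    using that by (auto simp: assignments_def card_Diff_subset finite_subset)
  have invol: "complement n (complement n W) = W" if "W \<in> assignments n k" for W n k
    using that by (auto simp: assignments_def)
  show "inj_on (complement n) (assignments n k)"
    by (metis inj_onI invol)
  show "complement n ` assignments n k = assignments n (n - k)"
  proof
    show "complement n ` assignments n k \<subseteq> assignments n (n - k)"
      using compl by blast
    show "assignments n (n - k) \<subseteq> complement n ` assignments n k"
      using compl[of _ n "n - k"] invol[of _ n "n - k"] assms
      by (metis diff_diff_cancel image_eqI subsetI)
  qed
qed

lemma mahal_complement: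
  assumes "W \<subseteq> {..<n}"
  shows "mahal n X (complement n W) = mahal n X W"
proof -
  define d where "d = mean_cov X W - mean_cov X (complement n W)"
  define M where "M = matrix_inv (Sxx n X)"
  have "finite W" using assms finite_subset by blast
  moreover have "card W \<le> n" using card_mono[OF _ assms] by simp
  ultimately have card: "real (card (complement n W)) = real n - real (card W)"
    using assms by (simp add: card_Diff_subset of_nat_diff)
  have "complement n (complement n W) = W" using assms by auto
  then have "mean_cov X (complement n W) - mean_cov X (complement n (complement n W)) = - d"
    by (simp add: d_def)
  moreover have "(- d) \<bullet> (M *v - d) = d \<bullet> (M *v d)"
    by (simp add: vec.neg)
  moreover have "(real n - real (card W)) * (1 - (real n - real (card W)) / real n)
      = real (card W) * (1 - real (card W) / real n)"
    using \<open>card W \<le> n\<close> by (cases "n = 0") (simp_all add: field_simps)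
  ultimately show ?thesis
    unfolding mahal_def Let_def card by (simp only: d_def M_def)
qed

definition swap_proposal :: "nat \<Rightarrow> nat set \<Rightarrow> nat set spmf" where
  "swap_proposal n W =
     spmf_of_set W \<bind> (\<lambda>i. spmf_of_set (complement n W) \<bind> (\<lambda>j. return_spmf (insert j (W - {i}))))"

lemma set_spmf_swap_proposal:
  assumes "W \<in> assignments n k"
  shows "set_spmf (swap_proposal n W) \<subseteq> assignments n k"
proof
  fix W' assume "W' \<in> set_spmf (swap_proposal n W)"
  moreover have "finite W" using assms by (rule finite_assignment)
  ultimately obtain i j where ij: "i \<in> W" "j \<in> complement n W" and W': "W' = insert j (W - {i})"
    by (auto simp: swap_proposal_def set_bind_spmf)
  moreover from ij \<open>finite W\<close> have "card W > 0" by (auto simp: card_gt_0_iff)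
  ultimately have "card W' = card W" using \<open>finite W\<close> by simp
  then show "W' \<in> assignments n k" using assms ij W' by (auto simp: assignments_def)
qed

lemma map_spmf_swap_proposal_complement:
  assumes "W \<subseteq> {..<n}"
  shows "map_spmf (complement n) (swap_proposal n W) = swap_proposal n (complement n W)"
proof -
  have "finite W" using assms finite_subset by blast
  have "map_spmf (complement n) (swap_proposal n W) =
      spmf_of_set W \<bind> (\<lambda>i. spmf_of_set (complement n W) \<bind>
        (\<lambda>j. return_spmf (insert i (complement n W - {j}))))"
    unfolding swap_proposal_def map_spmf_bind_spmf o_def
    using assms by (intro bind_spmf_cong refl) (auto simp: \<open>finite W\<close>)
  also have "\<dots> = spmf_of_set (complement n W) \<bind> (\<lambda>j. spmf_of_set W \<bind>
        (\<lambda>i. return_spmf (insert i (complement n W - {j}))))"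
    by (rule bind_commute_spmf)
  also have "\<dots> = swap_proposal n (complement n W)"
    using assms by (simp add: swap_proposal_def double_diff)
  finally show ?thesis .
qed

definition psrr_move ::
  "nat \<Rightarrow> (nat \<Rightarrow> real^'p) \<Rightarrow> real \<Rightarrow> (nat set \<Rightarrow> nat set spmf) \<Rightarrow> nat set \<Rightarrow> nat set spmf" where
  "psrr_move n X \<gamma> g W =
     swap_proposal n W \<bind> (\<lambda>W'.
       spmf_of_pmf (bernoulli_pmf (acc_prob \<gamma> (mahal n X W) (mahal n X W'))) \<bind>
       (\<lambda>acc. if acc then g W' else g W))"

lemma psrr_loop_body_eq_psrr_move:
  "spmf_of_set W \<bind> (\<lambda>i. spmf_of_set ({..<n} - W) \<bind> (\<lambda>j.
     let W' = insert j (W - {i})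
     in spmf_of_pmf (bernoulli_pmf (acc_prob \<gamma> (mahal n X W) (mahal n X W'))) \<bind>
        (\<lambda>acc. if acc then g W' else g W)))
   = psrr_move n X \<gamma> g W"
  by (simp add: psrr_move_def swap_proposal_def Let_def)

lemma set_spmf_psrr_move:
  assumes "W \<in> assignments n k" and "\<And>U. U \<in> assignments n k \<Longrightarrow> set_spmf (g U) \<subseteq> assignments n k"
  shows "set_spmf (psrr_move n X \<gamma> g W) \<subseteq> assignments n k"
  using assms set_spmf_swap_proposal[OF assms(1)]
  by (fastforce simp: psrr_move_def set_bind_spmf set_spmf_bind_pmf split: if_splits)

lemma psrr_move_complement:
  assumes "W \<subseteq> {..<n}"
    and g: "\<And>U. U \<subseteq> {..<n} \<Longrightarrow> g (complement n U) = map_spmf (complement n) (g U)"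
  shows "psrr_move n X \<gamma> g (complement n W) = map_spmf (complement n) (psrr_move n X \<gamma> g W)"
proof -
  have "psrr_move n X \<gamma> g (complement n W)
      = map_spmf (complement n) (swap_proposal n W) \<bind> (\<lambda>W'.
          spmf_of_pmf (bernoulli_pmf (acc_prob \<gamma> (mahal n X (complement n W)) (mahal n X W'))) \<bind>
          (\<lambda>acc. if acc then g W' else g (complement n W)))"
    by (simp add: psrr_move_def map_spmf_swap_proposal_complement[OF assms(1)])
  also have "\<dots> = swap_proposal n W \<bind> (\<lambda>W'. map_spmf (complement n)
          (spmf_of_pmf (bernoulli_pmf (acc_prob \<gamma> (mahal n X W) (mahal n X W'))) \<bind>
           (\<lambda>acc. if acc then g W' else g W)))"
    unfolding bind_map_spmf o_def
  proof (intro bind_spmf_cong refl)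
    fix W' assume "W' \<in> set_spmf (swap_proposal n W)"
    then have W': "W' \<subseteq> {..<n}"
      using set_spmf_swap_proposal[of W n "card W"] assms(1) by (auto simp: assignments_def)
    show "spmf_of_pmf (bernoulli_pmf (acc_prob \<gamma> (mahal n X (complement n W))
            (mahal n X (complement n W')))) \<bind>
          (\<lambda>acc. if acc then g (complement n W') else g (complement n W))
        = map_spmf (complement n)
          (spmf_of_pmf (bernoulli_pmf (acc_prob \<gamma> (mahal n X W) (mahal n X W'))) \<bind>
           (\<lambda>acc. if acc then g W' else g W))"
      unfolding map_spmf_bind_spmf o_def g[OF W'] g[OF assms(1)]
        mahal_complement[OF W'] mahal_complement[OF assms(1)]
      by (simp add: if_distrib)
  qed
  also have "\<dots> = map_spmf (complement n) (psrr_move n X \<gamma> g W)"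
    by (simp add: psrr_move_def map_spmf_bind_spmf o_def)
  finally show ?thesis .
qed

lemma set_spmf_psrr_loop:
  "\<forall>W\<in>assignments n k. set_spmf (psrr_loop n X a \<gamma> W) \<subseteq> assignments n k"
proof (induction rule: psrr_loop.fixp_induct)
  case (3 g)
  then show ?case
    unfolding psrr_loop_body_eq_psrr_move by (simp add: set_spmf_psrr_move)
qed (simp_all add: Ball_def)

lemma psrr_loop_complement:
  "\<forall>W. W \<subseteq> {..<n} \<longrightarrow>
     psrr_loop n X a \<gamma> (complement n W) = map_spmf (complement n) (psrr_loop n X a \<gamma> W)"
proof (induction rule: psrr_loop.fixp_induct)
  case 1
  show ?case
    by (intro admissible_all admissible_imp admissible_const
        admissible_eq_mcontI[where lub=lub_spmf and ord="ord_spmf (=)"] mcont_map_spmf)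
      (simp_all add: mcont_call)
next
  case (3 g)
  then show ?case
    unfolding psrr_loop_body_eq_psrr_move by (simp add: psrr_move_complement mahal_complement double_diff)
qed simp

lemma set_spmf_psrr: "set_spmf (psrr n k X a \<gamma>) \<subseteq> assignments n k"
  using finite_assignments set_spmf_psrr_loop[of n k X a \<gamma>]
  by (fastforce simp: psrr_def set_bind_spmf)

lemma map_spmf_complement_psrr:
  assumes "k \<le> n"
  shows "map_spmf (complement n) (psrr n k X a \<gamma>) = psrr n (n - k) X a \<gamma>"
proof -
  have "map_spmf (complement n) (psrr n k X a \<gamma>)
      = spmf_of_set (assignments n k) \<bind> (\<lambda>W. psrr_loop n X a \<gamma> (complement n W))"
    unfolding psrr_def map_spmf_bind_spmf o_def
    using psrr_loop_complement[of n X a \<gamma>] finite_assignment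
    by (intro bind_spmf_cong refl) (auto simp: assignments_def)
  also have "\<dots> = map_spmf (complement n) (spmf_of_set (assignments n k)) \<bind> psrr_loop n X a \<gamma>"
    by (simp add: bind_map_spmf o_def)
  also have "\<dots> = psrr n (n - k) X a \<gamma>"
    using complement_assignments[OF assms] by (simp add: psrr_def)
  finally show ?thesis .
qed

lemma tau_hat_add_complement:
  assumes "W \<subseteq> {..<n}" and "2 * card W = n"
  shows "tau_hat n Y1 Y0 W + tau_hat n Y1 Y0 (complement n W) = 2 * tau n Y1 Y0"
proof -
  have "finite W" using assms(1) finite_subset by blast
  then have card: "card (complement n W) = card W" "n - card W = card W"
    using assms by (simp_all add: card_Diff_subset)
  have split: "sum f {..<n} = sum f W + sum f (complement n W)" for f :: "nat \<Rightarrow> real"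
    using assms(1) by (simp add: sum.subset_diff)
  have "complement n (complement n W) = W" using assms(1) by auto
  then have "tau_hat n Y1 Y0 W + tau_hat n Y1 Y0 (complement n W)
      = (sum Y1 {..<n} - sum Y0 {..<n}) / real (card W)"
    unfolding tau_hat_def card split by (simp add: diff_divide_distrib add_divide_distrib)
  also have "\<dots> = 2 * tau n Y1 Y0"
    using assms(2) by (cases "n = 0") (auto simp: tau_def sum_subtractf field_simps)
  finally show ?thesis .
qed

lemma integral_measure_spmf_symmetric:
  fixes f :: "'a \<Rightarrow> real"
  assumes "map_spmf \<sigma> p = p" and "lossless_spmf p" and "finite (set_spmf p)"
    and "\<And>x. x \<in> set_spmf p \<Longrightarrow> f x + f (\<sigma> x) = 2 * c"
  shows "(\<integral>x. f x \<partial>measure_spmf p) = c"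
proof -
  have integrable: "integrable (measure_spmf p) h" for h :: "'a \<Rightarrow> real"
    using assms(3)
    by (intro measure_spmf.integrable_const_bound[where B="\<Sum>x\<in>set_spmf p. \<bar>h x\<bar>"])
      (auto intro: member_le_sum)
  have "(\<integral>x. f x \<partial>measure_spmf p) = (\<integral>x. f x \<partial>measure_spmf (map_spmf \<sigma> p))"
    using assms(1) by simp
  also have "\<dots> = (\<integral>x. f (\<sigma> x) \<partial>measure_spmf p)"
    unfolding measure_map_spmf_conv_distr by (rule integral_distr) simp_all
  finally have "2 * (\<integral>x. f x \<partial>measure_spmf p) = (\<integral>x. f x + f (\<sigma> x) \<partial>measure_spmf p)"
    using integrable by simp
  also have "\<dots> = (\<integral>x. 2 * c \<partial>measure_spmf p)"
    using assms(4) by (intro integral_cong_AE) auto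
  also have "\<dots> = 2 * c"
    using assms(2) by (simp add: lossless_weight_spmfD)
  finally show ?thesis by simp
qed

theorem theorem2:
  fixes n nt :: nat and X :: "nat \<Rightarrow> real^'p" and Y1 Y0 :: "nat \<Rightarrow> real"
    and a \<gamma> :: real
  assumes "even n" and "0 < n" and "nt = n div 2"
    and "invertible (Sxx n X)"
    and "a > 0" and "\<gamma> \<ge> 0"
    and "lossless_spmf (psrr n nt X a \<gamma>)"
  shows "(\<integral>W. tau_hat n Y1 Y0 W \<partial>measure_spmf (psrr n nt X a \<gamma>)) = tau n Y1 Y0"
proof (rule integral_measure_spmf_symmetric)
  have "n - nt = nt" using assms(1,3) by auto
  then show "map_spmf (complement n) (psrr n nt X a \<gamma>) = psrr n nt X a \<gamma>"
    using map_spmf_complement_psrr[of nt n X a \<gamma>] assms(3) by simp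
  show "finite (set_spmf (psrr n nt X a \<gamma>))"
    by (rule finite_subset[OF set_spmf_psrr finite_assignments])
  show "tau_hat n Y1 Y0 W + tau_hat n Y1 Y0 (complement n W) = 2 * tau n Y1 Y0"
    if "W \<in> set_spmf (psrr n nt X a \<gamma>)" for W
  proof (rule tau_hat_add_complement)
    have "W \<in> assignments n nt" using that set_spmf_psrr by blast
    then show "W \<subseteq> {..<n}" "2 * card W = n" using assms(1,3) by (auto simp: assignments_def)
  qed
qed (rule assms(7))

end
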